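(* Let $G$ be a finite abelian group, $R\subseteq \mathbb{Q}$ a subring, and $n\geq 1$ an integer. Let $S$ be the set of primes $\ell$ such that $\ell\mid \#G$ and $\ell^{-1}\notin R$. Then \[ Q_n(R,G)\cong \bigoplus_{\ell\in S}\mathrm{Syl}_{\ell}\big(Q_n(\mathbb{Z},G)\big) \] as $R$-modules, where the right-hand side is an $R$-module via the following structure on a finite abelian group $H$ all of whose prime divisors of $\#H$ are non-invertible in $R$: for $\frac{a}{b}\in R$ in lowest terms and $h\in H$, $\frac{a}{b}\cdot h := (h^{1/b})^a$, where $h^{1/b}$ is the unique element whose $b$-th power is $h$ (which exists since $\gcd(b,\#H)=1$).
   Context: For a ring $A$ and abelian group $G$, $A[G]$ is the group algebra, $[g]$ denotes $g$ viewed in $A[G]$, $I(A,G)$ is the kernel of the augmentation map $A[G]\to A$, $[g]\mapsto 1$, and $Q_n(A,G)=I(A,G)^n/I(A,G)^{n+1}$ (which for $A=\mathbb{Z}$ is a finite abelian group). For a finite abelian group $H$ and a prime $\ell$, $\mathrm{Syl}_\ell(H)$ is its $\ell$-Sylow subgroup, trivial if $\ell\nmid\#H$. *)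

theory Defs
  imports Complex_Main "HOL-Algebra.Group" "HOL-Computational_Algebra.Primes"
begin

definition subring_rat :: "rat set \<Rightarrow> bool" where
  "subring_rat R \<longleftrightarrow> 1 \<in> R \<and> (\<forall>x\<in>R. \<forall>y\<in>R. x + y \<in> R \<and> - x \<in> R \<and> x * y \<in> R)"

text \<open>Group algebra A[G] for a coefficient ring A (a subring of Q): functions on the
  (finite) carrier of G with values in A, vanishing outside the carrier.\<close>
definition ring_alg :: "('a, 'b) monoid_scheme \<Rightarrow> rat set \<Rightarrow> ('a \<Rightarrow> rat) set" where
  "ring_alg G A = {f. (\<forall>x. x \<notin> carrier G \<longrightarrow> f x = 0) \<and> (\<forall>x. f x \<in> A)}"

definition galg_mult :: "('a, 'b) monoid_scheme \<Rightarrow> ('a \<Rightarrow> rat) \<Rightarrow> ('a \<Rightarrow> rat) \<Rightarrow> 'a \<Rightarrow> rat" where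
  "galg_mult G f g = (\<lambda>x. if x \<in> carrier G
      then (\<Sum>y\<in>carrier G. f y * g (x \<otimes>\<^bsub>G\<^esub> inv\<^bsub>G\<^esub> y)) else 0)"

definition aug_ideal :: "('a, 'b) monoid_scheme \<Rightarrow> rat set \<Rightarrow> ('a \<Rightarrow> rat) set" where
  "aug_ideal G A = {f \<in> ring_alg G A. (\<Sum>x\<in>carrier G. f x) = 0}"

inductive_set ideal_prod :: "('a, 'b) monoid_scheme \<Rightarrow> ('a \<Rightarrow> rat) set \<Rightarrow> ('a \<Rightarrow> rat) set
    \<Rightarrow> ('a \<Rightarrow> rat) set" for G X Y where
  zero: "(\<lambda>x. 0) \<in> ideal_prod G X Y"
| step: "f \<in> X \<Longrightarrow> g \<in> Y \<Longrightarrow> h \<in> ideal_prod G X Y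
          \<Longrightarrow> (\<lambda>x. galg_mult G f g x + h x) \<in> ideal_prod G X Y"

fun aug_pow :: "('a, 'b) monoid_scheme \<Rightarrow> rat set \<Rightarrow> nat \<Rightarrow> ('a \<Rightarrow> rat) set" where
  "aug_pow G A 0 = ring_alg G A"
| "aug_pow G A (Suc n) = ideal_prod G (aug_ideal G A) (aug_pow G A n)"

definition qcoset :: "('a \<Rightarrow> rat) set \<Rightarrow> ('a \<Rightarrow> rat) \<Rightarrow> ('a \<Rightarrow> rat) set" where
  "qcoset J x = {(\<lambda>a. x a + j a) | j. j \<in> J}"

definition Qn :: "('a, 'b) monoid_scheme \<Rightarrow> rat set \<Rightarrow> nat \<Rightarrow> ('a \<Rightarrow> rat) set set" where
  "Qn G A n = qcoset (aug_pow G A (Suc n)) ` aug_pow G A n"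

definition qadd :: "('a \<Rightarrow> rat) set \<Rightarrow> ('a \<Rightarrow> rat) set \<Rightarrow> ('a \<Rightarrow> rat) set" where
  "qadd X Y = {(\<lambda>a. x a + y a) | x y. x \<in> X \<and> y \<in> Y}"

definition qsmul :: "('a \<Rightarrow> rat) set \<Rightarrow> rat \<Rightarrow> ('a \<Rightarrow> rat) set \<Rightarrow> ('a \<Rightarrow> rat) set" where
  "qsmul J r X = {(\<lambda>a. r * x a + j a) | x j. x \<in> X \<and> j \<in> J}"

text \<open>The zero of Q_n(Z,G), i.e. the subgroup I(Z,G)^(n+1).\<close>
abbreviation JZ :: "('a, 'b) monoid_scheme \<Rightarrow> nat \<Rightarrow> ('a \<Rightarrow> rat) set" where
  "JZ G n \<equiv> aug_pow G \<int> (Suc n)"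

definition SylQ :: "('a, 'b) monoid_scheme \<Rightarrow> nat \<Rightarrow> nat \<Rightarrow> ('a \<Rightarrow> rat) set set" where
  "SylQ G n l = {X \<in> Qn G \<int> n. \<exists>k. qsmul (JZ G n) (of_nat (l ^ k)) X = JZ G n}"

definition DS :: "('a, 'b) monoid_scheme \<Rightarrow> nat \<Rightarrow> nat set \<Rightarrow> (nat \<Rightarrow> ('a \<Rightarrow> rat) set) set" where
  "DS G n S = {F. (\<forall>l\<in>S. F l \<in> SylQ G n l) \<and> (\<forall>l. l \<notin> S \<longrightarrow> F l = JZ G n)}"

definition ds_add :: "(nat \<Rightarrow> ('a \<Rightarrow> rat) set) \<Rightarrow> (nat \<Rightarrow> ('a \<Rightarrow> rat) set) \<Rightarrow> nat \<Rightarrow> ('a \<Rightarrow> rat) set" where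
  "ds_add F F' = (\<lambda>l. qadd (F l) (F' l))"

definition ds_zmult :: "('a, 'b) monoid_scheme \<Rightarrow> nat \<Rightarrow> int \<Rightarrow> (nat \<Rightarrow> ('a \<Rightarrow> rat) set)
    \<Rightarrow> nat \<Rightarrow> ('a \<Rightarrow> rat) set" where
  "ds_zmult G n k F = (\<lambda>l. qsmul (JZ G n) (of_int k) (F l))"

definition ds_rsmul :: "('a, 'b) monoid_scheme \<Rightarrow> nat \<Rightarrow> nat set \<Rightarrow> rat
    \<Rightarrow> (nat \<Rightarrow> ('a \<Rightarrow> rat) set) \<Rightarrow> nat \<Rightarrow> ('a \<Rightarrow> rat) set" where
  "ds_rsmul G n S r F = (case quotient_of r of (a, b) \<Rightarrow>
     ds_zmult G n a (THE F'. F' \<in> DS G n S \<and> ds_zmult G n b F' = F))"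

end

(*
  Multiplication by N = #G maps I(Z,G)^n into I(Z,G)^(n+1): for h of augmentation zero,
  the sum over all x of ([1] - [x]) h equals N h.  So Q_n(Z,G) is killed by N and is the direct
  sum of its l-primary parts for the primes l dividing N.  Every element of I(R,G)^k lies in
  I(Z,G)^k after multiplication by a positive integer invertible in R, so passing to R inverts
  exactly those integers: the Sylow subgroups at primes invertible in R disappear and the others
  survive.  Concretely, sending a family of l-torsion classes x_l + I(Z,G)^(n+1), l in S, to
  (sum of the x_l) + I(R,G)^(n+1) is additive and bijective.  A relation among the x_l is split
  into its components by multipliers divisible by all primary parts but one and prime to that
  one; a preimage is found by splitting along the Chinese remainder theorem.  Finally a/b acts
  on both sides through the unique division by b, so the map is R-linear.
*)

theory Submission
  imports Defs "HOL-Library.Function_Algebras" "HOL-Library.Indicator_Function"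
begin

lemma sum_fun_apply: "(\<Sum>i\<in>I. f i) x = (\<Sum>i\<in>I. f i x)"
  by (induction I rule: infinite_finite_induct) auto

definition smult_fun :: "rat \<Rightarrow> ('a \<Rightarrow> rat) \<Rightarrow> 'a \<Rightarrow> rat" where
  "smult_fun c f = (\<lambda>a. c * f a)"

lemma smult_fun_apply [simp]: "smult_fun c f a = c * f a"
  by (simp add: smult_fun_def)

lemma smult_fun_smult_fun [simp]: "smult_fun c (smult_fun d f) = smult_fun (c * d) f"
  by (simp add: fun_eq_iff)

lemma smult_fun_one [simp]: "smult_fun 1 f = f"
  by (simp add: fun_eq_iff)

lemma smult_fun_zero_right [simp]: "smult_fun c 0 = 0"
  by (simp add: fun_eq_iff)

lemma smult_fun_add_right: "smult_fun c (f + g) = smult_fun c f + smult_fun c g"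
  by (simp add: fun_eq_iff algebra_simps)

lemma smult_fun_diff_right: "smult_fun c (f - g) = smult_fun c f - smult_fun c g"
  by (simp add: fun_eq_iff algebra_simps)

lemma smult_fun_add_left: "smult_fun (c + d) f = smult_fun c f + smult_fun d f"
  by (simp add: fun_eq_iff algebra_simps)

lemma smult_fun_diff_left: "smult_fun (c - d) f = smult_fun c f - smult_fun d f"
  by (simp add: fun_eq_iff algebra_simps)

lemma smult_fun_sum_right: "smult_fun c (\<Sum>i\<in>I. f i) = (\<Sum>i\<in>I. smult_fun c (f i))"
  by (simp add: fun_eq_iff sum_fun_apply sum_distrib_left)

lemma smult_fun_sum_left: "smult_fun (\<Sum>i\<in>I. c i) f = (\<Sum>i\<in>I. smult_fun (c i) f)"
  by (simp add: fun_eq_iff sum_fun_apply sum_distrib_right)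

section \<open>Subrings of the rationals and their denominators\<close>

lemma subring_rat_one: "subring_rat R \<Longrightarrow> 1 \<in> R"
  and subring_rat_add: "subring_rat R \<Longrightarrow> x \<in> R \<Longrightarrow> y \<in> R \<Longrightarrow> x + y \<in> R"
  and subring_rat_uminus: "subring_rat R \<Longrightarrow> x \<in> R \<Longrightarrow> - x \<in> R"
  and subring_rat_mult: "subring_rat R \<Longrightarrow> x \<in> R \<Longrightarrow> y \<in> R \<Longrightarrow> x * y \<in> R"
  by (simp_all add: subring_rat_def)

lemma subring_rat_zero: "subring_rat R \<Longrightarrow> 0 \<in> R"
  using subring_rat_add[of R 1 "-1"] by (simp add: subring_rat_one subring_rat_uminus)

lemma subring_rat_of_int: "subring_rat R \<Longrightarrow> of_int k \<in> R"
proof (induction k rule: int_induct[where k = 0])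
  case (step2 i)
  then show ?case
    using subring_rat_add[of R "of_int i" "-1"] by (simp add: subring_rat_one subring_rat_uminus)
qed (simp_all add: subring_rat_zero subring_rat_add subring_rat_one)

lemma subring_rat_Ints: "subring_rat \<int>"
  by (auto simp: subring_rat_def)

lemma Ints_subset_subring_rat: "subring_rat R \<Longrightarrow> \<int> \<subseteq> R"
  by (auto elim: Ints_cases simp: subring_rat_of_int)

lemma subring_rat_sum: "subring_rat R \<Longrightarrow> (\<And>i. i \<in> I \<Longrightarrow> f i \<in> R) \<Longrightarrow> (\<Sum>i\<in>I. f i) \<in> R"
  by (induction I rule: infinite_finite_induct) (auto simp: subring_rat_zero subring_rat_add)

definition unit_nats :: "rat set \<Rightarrow> nat set" where
  "unit_nats R = {D. D > 0 \<and> 1 / of_nat D \<in> R}"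

lemma one_in_unit_nats: "subring_rat R \<Longrightarrow> 1 \<in> unit_nats R"
  by (simp add: unit_nats_def subring_rat_one)

lemma unit_nats_mult: "subring_rat R \<Longrightarrow> D \<in> unit_nats R \<Longrightarrow> E \<in> unit_nats R \<Longrightarrow> D * E \<in> unit_nats R"
  using subring_rat_mult[of R "1 / of_nat D" "1 / of_nat E"] by (simp add: unit_nats_def)

lemma unit_nats_power: "subring_rat R \<Longrightarrow> D \<in> unit_nats R \<Longrightarrow> D ^ k \<in> unit_nats R"
  by (induction k) (simp_all add: one_in_unit_nats[simplified] unit_nats_mult)

lemma unit_nats_prod:
  "subring_rat R \<Longrightarrow> (\<And>i. i \<in> I \<Longrightarrow> f i \<in> unit_nats R) \<Longrightarrow> (\<Prod>i\<in>I. f i) \<in> unit_nats R"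
  by (induction I rule: infinite_finite_induct) (simp_all add: one_in_unit_nats[simplified] unit_nats_mult)

lemma coprime_unit_nats_prime:
  assumes "subring_rat R" "D \<in> unit_nats R" "prime l" "1 / of_nat l \<notin> R"
  shows "coprime D l"
proof -
  have "\<not> l dvd D"
  proof
    assume "l dvd D"
    then obtain m where "D = l * m" ..
    with assms(2) have "1 / of_nat l = of_int (int m) * (1 / of_nat D :: rat)"
      by (simp add: unit_nats_def)
    with assms show False
      using subring_rat_mult[OF assms(1) subring_rat_of_int] by (metis mem_Collect_eq unit_nats_def)
  qed
  then show ?thesis
    using assms(3) prime_imp_coprime coprime_commute by blast
qed

lemma denominator_in_unit_nats:
  assumes R: "subring_rat R" "r \<in> R" and ab: "quotient_of r = (a, b)"
  shows "nat b \<in> unit_nats R"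
proof -
  have b: "b > 0"
    using quotient_of_denom_pos[OF ab] .
  obtain u v where "u * a + v * b = 1"
    using bezout_int[of a b] quotient_of_coprime[OF ab] by auto
  then have uv: "of_int u * of_int a + of_int v * of_int b = (1 :: rat)"
    by (metis of_int_1 of_int_add of_int_mult)
  have "of_int u * r + of_int v = (of_int u * (r * of_int b) + of_int v * of_int b) / (of_int b :: rat)"
    using b by (simp add: field_simps)
  also have "\<dots> = 1 / of_int b"
    using uv b quotient_of_div[OF ab] by simp
  finally have "(1 / of_int b :: rat) = of_int u * r + of_int v" ..
  then have "1 / of_int b \<in> R"
    using R by (simp add: subring_rat_add subring_rat_mult subring_rat_of_int)
  then show ?thesis
    using b by (simp add: unit_nats_def)
qed

lemma clear_denominators:
  assumes R: "subring_rat R" and "finite B" "\<And>x. x \<in> B \<Longrightarrow> f x \<in> R"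
  shows "\<exists>D\<in>unit_nats R. \<forall>x\<in>B. of_nat D * f x \<in> \<int>"
  using assms(2,3)
proof (induction B rule: finite_induct)
  case empty
  then show ?case
    using one_in_unit_nats[OF R] by blast
next
  case (insert y B)
  then obtain D where D: "D \<in> unit_nats R" "\<forall>x\<in>B. of_nat D * f x \<in> \<int>"
    by auto
  obtain a b where ab: "quotient_of (f y) = (a, b)"
    by (cases "quotient_of (f y)")
  have "of_nat (D * nat b) * f x \<in> \<int>" if "x \<in> insert y B" for x
  proof (cases "x = y")
    case True
    have "of_nat (D * nat b) * f y = of_nat D * (of_nat (nat b) * f y)"
      by simp
    also have "\<dots> = of_nat D * of_int a"
      using quotient_of_div[OF ab] quotient_of_denom_pos[OF ab] by simp
    finally show ?thesis
      using True by (simp only: Ints_mult Ints_of_nat Ints_of_int)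
  next
    case False
    have "of_nat (D * nat b) * f x = of_nat (nat b) * (of_nat D * f x)"
      by simp
    then show ?thesis
      using False that D(2) by (metis Ints_mult Ints_of_nat insertE)
  qed
  moreover have "D * nat b \<in> unit_nats R"
    using denominator_in_unit_nats[OF R _ ab] insert.prems D(1) unit_nats_mult[OF R] by simp
  ultimately show ?case
    by blast
qed

lemma qadd_eq: "qadd X Y = {u + v |u v. u \<in> X \<and> v \<in> Y}"
  by (simp add: qadd_def plus_fun_def)

lemma qsmul_eq: "qsmul J c X = {smult_fun c u + j |u j. u \<in> X \<and> j \<in> J}"
  by (simp add: qsmul_def plus_fun_def smult_fun_def)

locale submodule_rat =
  fixes A :: "rat set" and J :: "('a \<Rightarrow> rat) set"
  assumes subring: "subring_rat A"
    and zero_closed: "0 \<in> J"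
    and add_closed: "x \<in> J \<Longrightarrow> y \<in> J \<Longrightarrow> x + y \<in> J"
    and smult_closed: "c \<in> A \<Longrightarrow> x \<in> J \<Longrightarrow> smult_fun c x \<in> J"
begin

lemma smult_int_closed: "x \<in> J \<Longrightarrow> smult_fun (of_int k) x \<in> J"
  by (simp add: smult_closed subring subring_rat_of_int)

lemma smult_nat_closed: "x \<in> J \<Longrightarrow> smult_fun (of_nat k) x \<in> J"
  using smult_int_closed[of x "int k"] by simp

lemma uminus_closed: "x \<in> J \<Longrightarrow> - x \<in> J"
  using smult_int_closed[of x "-1"] by (simp add: smult_fun_def fun_Compl_def)

lemma diff_closed: "x \<in> J \<Longrightarrow> y \<in> J \<Longrightarrow> x - y \<in> J"
  using add_closed[of x "- y"] uminus_closed by simp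

lemma sum_closed: "(\<And>i. i \<in> I \<Longrightarrow> f i \<in> J) \<Longrightarrow> (\<Sum>i\<in>I. f i) \<in> J"
  by (induction I rule: infinite_finite_induct) (auto simp: zero_closed add_closed)

lemma smult_dvd_closed:
  assumes "a dvd b" "smult_fun (of_int a) x \<in> J"
  shows "smult_fun (of_int b) x \<in> J"
proof -
  obtain c where "b = a * c"
    using assms(1) ..
  then show ?thesis
    using smult_int_closed[OF assms(2), of c] by (simp add: mult.commute)
qed

lemma coprime_smult_closed_imp_mem:
  assumes "coprime a b" "smult_fun (of_int a) x \<in> J" "smult_fun (of_int b) x \<in> J"
  shows "x \<in> J"
proof -
  obtain u v where "u * a + v * b = 1"
    using bezout_int[of a b] assms(1) by auto
  then have "x = smult_fun (of_int u) (smult_fun (of_int a) x) + smult_fun (of_int v) (smult_fun (of_int b) x)"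
    by (simp flip: smult_fun_add_left of_int_mult of_int_add)
  then show ?thesis
    using assms(2,3) by (metis add_closed smult_int_closed)
qed

lemma smult_invertible_imp_mem:
  assumes "1 / c \<in> A" "c \<noteq> 0" "smult_fun c x \<in> J"
  shows "x \<in> J"
  using smult_closed[OF assms(1,3)] assms(2) by simp

lemma qcoset_eq_image: "qcoset J x = (\<lambda>j. x + j) ` J"
  by (auto simp: qcoset_def plus_fun_def)

lemma qcoset_zero: "qcoset J 0 = J"
  by (simp add: qcoset_eq_image)

lemma qcoset_eq_iff: "qcoset J x = qcoset J y \<longleftrightarrow> x - y \<in> J"
proof
  assume "qcoset J x = qcoset J y"
  then have "x \<in> (\<lambda>j. y + j) ` J"
    using zero_closed by (force simp: qcoset_eq_image)
  then show "x - y \<in> J"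
    by auto
next
  assume "x - y \<in> J"
  moreover have "x + j = y + ((x - y) + j)" "y + j = x + (j - (x - y))" for j
    by simp_all
  ultimately show "qcoset J x = qcoset J y"
    unfolding qcoset_eq_image using add_closed diff_closed by blast
qed

lemma qadd_qcoset: "qadd (qcoset J x) (qcoset J y) = qcoset J (x + y)"
proof -
  have "(x + j) + (y + j') = (x + y) + (j + j')" "(x + y) + j = (x + j) + (y + 0)" for j j'
    by (simp_all add: algebra_simps)
  then show ?thesis
    unfolding qadd_eq qcoset_eq_image using zero_closed add_closed by blast
qed

lemma qsmul_qcoset:
  assumes "c \<in> A"
  shows "qsmul J c (qcoset J x) = qcoset J (smult_fun c x)"
proof -
  have "smult_fun c (x + j) + j' = smult_fun c x + (smult_fun c j + j')"
    "smult_fun c x + j = smult_fun c (x + 0) + j" for j j'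
    by (simp_all add: smult_fun_add_right algebra_simps)
  then show ?thesis
    unfolding qsmul_eq qcoset_eq_image using zero_closed add_closed smult_closed[OF assms] by blast
qed

lemma qsmul_qcoset_eq_iff:
  assumes "c \<in> A" "1 / c \<in> A" "c \<noteq> 0"
  shows "qsmul J c (qcoset J z) = qcoset J x \<longleftrightarrow> qcoset J z = qsmul J (1 / c) (qcoset J x)"
proof -
  have "smult_fun c z - x \<in> J \<longleftrightarrow> z - smult_fun (1 / c) x \<in> J"
  proof
    assume "smult_fun c z - x \<in> J"
    from smult_closed[OF assms(2) this] show "z - smult_fun (1 / c) x \<in> J"
      using assms(3) by (simp add: smult_fun_diff_right)
  next
    assume "z - smult_fun (1 / c) x \<in> J"
    from smult_closed[OF assms(1) this] show "smult_fun c z - x \<in> J"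
      using assms(3) by (simp add: smult_fun_diff_right)
  qed
  then show ?thesis
    using assms by (simp add: qsmul_qcoset qcoset_eq_iff)
qed

end

section \<open>The group algebra and powers of the augmentation ideal\<close>

lemma galg_mult_diff_left: "galg_mult G (f - f') g = galg_mult G f g - galg_mult G f' g"
  by (auto simp: galg_mult_def fun_eq_iff sum_subtractf algebra_simps)

lemma galg_mult_smult_left: "galg_mult G (smult_fun c f) g = smult_fun c (galg_mult G f g)"
  by (auto simp: galg_mult_def fun_eq_iff sum_distrib_left mult.assoc)

lemma galg_mult_smult_right: "galg_mult G f (smult_fun c g) = smult_fun c (galg_mult G f g)"
  by (auto simp: galg_mult_def fun_eq_iff sum_distrib_left algebra_simps)

lemma galg_mult_outside: "x \<notin> carrier G \<Longrightarrow> galg_mult G f g x = 0"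
  by (simp add: galg_mult_def)

lemma (in group) sum_carrier_mult_inv_left:
  assumes "a \<in> carrier G"
  shows "(\<Sum>y\<in>carrier G. h (a \<otimes> inv y)) = (\<Sum>y\<in>carrier G. h y)"
proof -
  have "a \<otimes> (inv a \<otimes> b) = b" if "b \<in> carrier G" for b
    using assms that by (simp flip: m_assoc)
  then show ?thesis
    by (intro sum.reindex_bij_witness[where i = "\<lambda>z. inv z \<otimes> a" and j = "\<lambda>y. a \<otimes> inv y"])
       (use assms in \<open>auto simp: inv_mult_group m_assoc\<close>)
qed

lemma (in group) sum_carrier_mult_inv_right:
  assumes "y \<in> carrier G"
  shows "(\<Sum>a\<in>carrier G. h (a \<otimes> inv y)) = (\<Sum>a\<in>carrier G. h a)"
  by (rule sum.reindex_bij_witness[where i = "\<lambda>z. z \<otimes> y" and j = "\<lambda>a. a \<otimes> inv y"])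
     (use assms in \<open>auto simp: m_assoc\<close>)

lemma (in group) sum_galg_mult:
  "(\<Sum>a\<in>carrier G. galg_mult G f g a) = (\<Sum>y\<in>carrier G. f y) * (\<Sum>y\<in>carrier G. g y)"
proof -
  have "(\<Sum>a\<in>carrier G. galg_mult G f g a) = (\<Sum>a\<in>carrier G. \<Sum>y\<in>carrier G. f y * g (a \<otimes> inv y))"
    by (simp add: galg_mult_def)
  also have "\<dots> = (\<Sum>y\<in>carrier G. f y * (\<Sum>a\<in>carrier G. g (a \<otimes> inv y)))"
    by (subst sum.swap) (simp add: sum_distrib_left)
  also have "\<dots> = (\<Sum>y\<in>carrier G. f y * (\<Sum>a\<in>carrier G. g a))"
    by (simp add: sum_carrier_mult_inv_right)
  finally show ?thesis
    by (simp add: sum_distrib_right)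
qed

lemma (in group) galg_mult_indicator:
  assumes "finite (carrier G)" "x \<in> carrier G" "a \<in> carrier G"
  shows "galg_mult G (indicator {x}) h a = h (a \<otimes> inv x)"
  using assms by (simp add: galg_mult_def indicator_def if_distrib sum.delta)

lemma ring_alg_add: "subring_rat A \<Longrightarrow> f \<in> ring_alg G A \<Longrightarrow> g \<in> ring_alg G A \<Longrightarrow> f + g \<in> ring_alg G A"
  by (auto simp: ring_alg_def subring_rat_add)

lemma ring_alg_smult: "subring_rat A \<Longrightarrow> c \<in> A \<Longrightarrow> f \<in> ring_alg G A \<Longrightarrow> smult_fun c f \<in> ring_alg G A"
  by (auto simp: ring_alg_def subring_rat_mult)

lemma galg_mult_ring_alg:
  "subring_rat A \<Longrightarrow> f \<in> ring_alg G A \<Longrightarrow> g \<in> ring_alg G A \<Longrightarrow> galg_mult G f g \<in> ring_alg G A"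
  by (auto simp: galg_mult_def ring_alg_def subring_rat_zero intro!: subring_rat_sum subring_rat_mult)

lemma aug_ideal_smult:
  "subring_rat A \<Longrightarrow> c \<in> A \<Longrightarrow> f \<in> aug_ideal G A \<Longrightarrow> smult_fun c f \<in> aug_ideal G A"
  by (auto simp: aug_ideal_def ring_alg_smult simp flip: sum_distrib_left)

lemma ideal_prod_add:
  assumes "h \<in> ideal_prod G X Y" "h' \<in> ideal_prod G X Y"
  shows "h + h' \<in> ideal_prod G X Y"
  using assms(1)
proof (induction rule: ideal_prod.induct)
  case zero
  then show ?case
    using assms(2) by (simp flip: zero_fun_def)
next
  case (step f g h)
  have "(\<lambda>x. galg_mult G f g x + h x) + h' = (\<lambda>x. galg_mult G f g x + (h + h') x)"
    by (simp add: fun_eq_iff add.assoc)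
  then show ?case
    using step by (simp add: ideal_prod.step)
qed

lemma ideal_prod_smult:
  assumes "\<And>f. f \<in> X \<Longrightarrow> smult_fun c f \<in> X" "h \<in> ideal_prod G X Y"
  shows "smult_fun c h \<in> ideal_prod G X Y"
  using assms(2)
proof (induction rule: ideal_prod.induct)
  case zero
  then show ?case
    using ideal_prod.zero by (simp add: smult_fun_def)
next
  case (step f g h)
  have "smult_fun c (\<lambda>x. galg_mult G f g x + h x) = (\<lambda>x. galg_mult G (smult_fun c f) g x + smult_fun c h x)"
    by (simp add: fun_eq_iff galg_mult_smult_left algebra_simps)
  then show ?case
    using step assms(1) by (simp add: ideal_prod.step)
qed

lemma ideal_prod_mono:
  assumes "X \<subseteq> X'" "Y \<subseteq> Y'"
  shows "ideal_prod G X Y \<subseteq> ideal_prod G X' Y'"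
proof
  fix h assume "h \<in> ideal_prod G X Y"
  then show "h \<in> ideal_prod G X' Y'"
    by induction (use assms in \<open>auto intro: ideal_prod.intros\<close>)
qed

lemma ideal_prod_subset_aug_ideal:
  assumes "group G" "subring_rat A" "X \<subseteq> aug_ideal G A" "Y \<subseteq> ring_alg G A"
  shows "ideal_prod G X Y \<subseteq> aug_ideal G A"
proof
  fix h assume "h \<in> ideal_prod G X Y"
  then show "h \<in> aug_ideal G A"
  proof induction
    case zero
    then show ?case
      using assms(2) by (simp add: aug_ideal_def ring_alg_def subring_rat_zero)
  next
    case (step f g h)
    then have f: "f \<in> ring_alg G A" "(\<Sum>x\<in>carrier G. f x) = 0"
      using assms(3) by (auto simp: aug_ideal_def)
    have "galg_mult G f g \<in> ring_alg G A"
      using galg_mult_ring_alg[OF assms(2) f(1)] step(2) assms(4) by blast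
    moreover have "(\<Sum>x\<in>carrier G. galg_mult G f g x) = 0"
      using group.sum_galg_mult[OF assms(1)] f(2) by simp
    ultimately show ?case
      using step.IH ring_alg_add[OF assms(2)] by (auto simp: aug_ideal_def sum.distrib plus_fun_def)
  qed
qed

lemma ideal_prod_sum:
  assumes "finite I" "\<And>i. i \<in> I \<Longrightarrow> f i \<in> X" "g \<in> Y"
  shows "(\<Sum>i\<in>I. galg_mult G (f i) g) \<in> ideal_prod G X Y"
  using assms
proof (induction I rule: finite_induct)
  case empty
  then show ?case
    using ideal_prod.zero by (simp add: zero_fun_def)
next
  case (insert i I)
  then show ?case
    using ideal_prod.step[of "f i" X g Y "\<Sum>i\<in>I. galg_mult G (f i) g" G] by (simp add: plus_fun_def)
qed

lemma aug_pow_Suc_subset_aug_ideal: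
  assumes "group G" "subring_rat A"
  shows "aug_pow G A (Suc k) \<subseteq> aug_ideal G A"
proof (induction k)
  case 0
  then show ?case
    using ideal_prod_subset_aug_ideal[OF assms] by simp
next
  case (Suc k)
  then have "aug_pow G A (Suc k) \<subseteq> ring_alg G A"
    by (auto simp: aug_ideal_def)
  then show ?case
    using ideal_prod_subset_aug_ideal[OF assms] by simp
qed

lemma galg_mult_in_ideal_prod: "f \<in> X \<Longrightarrow> g \<in> Y \<Longrightarrow> galg_mult G f g \<in> ideal_prod G X Y"
  using ideal_prod.step[OF _ _ ideal_prod.zero, of f X g Y G] by simp

lemma aug_pow_submodule:
  assumes "subring_rat A"
  shows "submodule_rat A (aug_pow G A k)"
proof (cases k)
  case 0
  have "0 \<in> ring_alg G A"
    using assms by (simp add: ring_alg_def subring_rat_zero)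
  with 0 show ?thesis
    using assms by unfold_locales (simp_all add: ring_alg_add ring_alg_smult)
next
  case (Suc m)
  have "0 \<in> ideal_prod G X Y" for X Y
    using ideal_prod.zero by (simp add: zero_fun_def)
  then show ?thesis
    using assms Suc by unfold_locales (auto intro: ideal_prod_add ideal_prod_smult aug_ideal_smult)
qed

lemma aug_pow_mono: "A \<subseteq> A' \<Longrightarrow> aug_pow G A k \<subseteq> aug_pow G A' k"
proof (induction k)
  case 0
  then show ?case
    by (auto simp: ring_alg_def)
next
  case (Suc k)
  moreover have "aug_ideal G A \<subseteq> aug_ideal G A'"
    using Suc.prems by (auto simp: aug_ideal_def ring_alg_def)
  ultimately show ?case
    using ideal_prod_mono by simp
qed

lemma (in group) card_smult_aug_pow_Suc:
  assumes fin: "finite (carrier G)" and A: "subring_rat A" and "k \<ge> 1"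
    and h: "h \<in> aug_pow G A k"
  shows "smult_fun (of_nat (card (carrier G))) h \<in> aug_pow G A (Suc k)"
proof -
  define f :: "'a \<Rightarrow> 'a \<Rightarrow> rat" where "f x = indicator {\<one>} - indicator {x}" for x
  have f: "f x \<in> aug_ideal G A" if "x \<in> carrier G" for x
    using that A fin
    by (auto simp: f_def aug_ideal_def ring_alg_def indicator_def sum_subtractf
        subring_rat_zero subring_rat_one subring_rat_uminus)
  have "h \<in> aug_ideal G A"
    using aug_pow_Suc_subset_aug_ideal[OF is_group A] h \<open>k \<ge> 1\<close> by (cases k) auto
  then have h_sum: "(\<Sum>a\<in>carrier G. h a) = 0" and h_outside: "\<And>a. a \<notin> carrier G \<Longrightarrow> h a = 0"
    by (auto simp: aug_ideal_def ring_alg_def)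
  text \<open>Summing \<open>([\<one>] - [x]) h\<close> over all \<open>x\<close> gives \<open>card (carrier G) \<cdot> h\<close> minus the
    constant function whose value is the augmentation of \<open>h\<close>, which vanishes.\<close>
  have "(\<Sum>x\<in>carrier G. galg_mult G (f x) h) = smult_fun (of_nat (card (carrier G))) h"
  proof
    fix a
    show "(\<Sum>x\<in>carrier G. galg_mult G (f x) h) a = smult_fun (of_nat (card (carrier G))) h a"
    proof (cases "a \<in> carrier G")
      case True
      have "(\<Sum>x\<in>carrier G. galg_mult G (f x) h) a = (\<Sum>x\<in>carrier G. h a - h (a \<otimes> inv x))"
        using True fin by (simp add: sum_fun_apply f_def galg_mult_diff_left galg_mult_indicator)
      also have "\<dots> = of_nat (card (carrier G)) * h a"
        using h_sum by (simp add: sum_subtractf sum_carrier_mult_inv_left[OF True])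
      finally show ?thesis
        by simp
    qed (simp add: sum_fun_apply galg_mult_outside h_outside)
  qed
  moreover have "(\<Sum>x\<in>carrier G. galg_mult G (f x) h) \<in> aug_pow G A (Suc k)"
    using ideal_prod_sum[OF fin f h] by simp
  ultimately show ?thesis
    by simp
qed

lemma ring_alg_clear_denominators:
  assumes "subring_rat R" "finite (carrier G)" "f \<in> ring_alg G R"
  shows "\<exists>D\<in>unit_nats R. smult_fun (of_nat D) f \<in> ring_alg G \<int>"
  using clear_denominators[OF assms(1,2), of f] assms(3) by (fastforce simp: ring_alg_def)

lemma aug_ideal_clear_denominators:
  assumes "subring_rat R" "finite (carrier G)" "f \<in> aug_ideal G R"
  shows "\<exists>D\<in>unit_nats R. smult_fun (of_nat D) f \<in> aug_ideal G \<int>"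
  using ring_alg_clear_denominators[OF assms(1,2), of f] assms(3)
  by (auto simp: aug_ideal_def simp flip: sum_distrib_left)

lemma aug_pow_clear_denominators:
  assumes R: "subring_rat R" and fin: "finite (carrier G)"
  shows "x \<in> aug_pow G R k \<Longrightarrow> \<exists>D\<in>unit_nats R. smult_fun (of_nat D) x \<in> aug_pow G \<int> k"
proof (induction k arbitrary: x)
  case 0
  then show ?case
    using ring_alg_clear_denominators[OF R fin] by (simp only: aug_pow.simps)
next
  case (Suc k)
  interpret Z: submodule_rat \<int> "aug_pow G \<int> (Suc k)"
    by (rule aug_pow_submodule[OF subring_rat_Ints])
  from Suc.prems have "x \<in> ideal_prod G (aug_ideal G R) (aug_pow G R k)"
    by simp
  then show ?case
  proof induction
    case zero
    then show ?case
      using one_in_unit_nats[OF R] Z.zero_closed by (auto simp: zero_fun_def)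
  next
    case (step f g h)
    obtain D1 where D1: "D1 \<in> unit_nats R" "smult_fun (of_nat D1) f \<in> aug_ideal G \<int>"
      using aug_ideal_clear_denominators[OF R fin step(1)] by blast
    obtain D2 where D2: "D2 \<in> unit_nats R" "smult_fun (of_nat D2) g \<in> aug_pow G \<int> k"
      using Suc.IH[OF step(2)] by blast
    obtain D3 where D3: "D3 \<in> unit_nats R" "smult_fun (of_nat D3) h \<in> aug_pow G \<int> (Suc k)"
      using step(4) by blast
    have "smult_fun (of_nat (D1 * D2 * D3)) (\<lambda>a. galg_mult G f g a + h a)
        = smult_fun (of_nat D3) (galg_mult G (smult_fun (of_nat D1) f) (smult_fun (of_nat D2) g))
          + smult_fun (of_nat (D1 * D2)) (smult_fun (of_nat D3) h)"
      by (simp add: galg_mult_smult_left galg_mult_smult_right fun_eq_iff algebra_simps)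
    also have "\<dots> \<in> aug_pow G \<int> (Suc k)"
    proof (rule Z.add_closed)
      show "smult_fun (of_nat D3) (galg_mult G (smult_fun (of_nat D1) f) (smult_fun (of_nat D2) g))
          \<in> aug_pow G \<int> (Suc k)"
        using D1(2) D2(2) by (intro Z.smult_nat_closed) (simp add: galg_mult_in_ideal_prod)
    qed (rule Z.smult_nat_closed[OF D3(2)])
    finally show ?case
      using unit_nats_mult[OF R] D1(1) D2(1) D3(1) by blast
  qed
qed

section \<open>Primary parts and the Chinese remainder theorem\<close>

lemma prod_dvd_if_pairwise_coprime:
  fixes f :: "'i \<Rightarrow> 'a :: semiring_gcd"
  assumes "finite A" "\<And>i j. i \<in> A \<Longrightarrow> j \<in> A \<Longrightarrow> i \<noteq> j \<Longrightarrow> coprime (f i) (f j)"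
    and "\<And>i. i \<in> A \<Longrightarrow> f i dvd c"
  shows "prod f A dvd c"
  using assms
proof (induction A rule: finite_induct)
  case (insert i A)
  then have "coprime (f i) (prod f A)"
    by (metis insert_iff prod_coprime_right)
  with insert show ?case
    by (simp add: divides_mult)
qed simp

text \<open>\<open>c l\<close> is the \<open>l\<close>-th Chinese remainder component of \<open>E\<inverse>\<close> modulo \<open>\<Prod>q\<close>:
  it is \<open>E\<inverse>\<close> modulo \<open>q l\<close> and \<open>0\<close> modulo every other \<open>q l'\<close>.\<close>
lemma crt_components_of_inverse:
  fixes q :: "'i \<Rightarrow> int"
  assumes fin: "finite S" and pairwise: "\<And>l l'. l \<in> S \<Longrightarrow> l' \<in> S \<Longrightarrow> l \<noteq> l' \<Longrightarrow> coprime (q l) (q l')"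
    and E: "\<And>l. l \<in> S \<Longrightarrow> coprime E (q l)"
  shows "\<exists>c. (\<forall>l\<in>S. prod q S dvd q l * c l) \<and> prod q S dvd E * sum c S - 1"
proof -
  define m where "m l = prod q (S - {l})" for l
  have qm: "prod q S = q l * m l" if "l \<in> S" for l
    using prod.remove[OF fin that] by (simp add: m_def)
  have "\<exists>t. q l dvd t * (E * m l) - 1" if "l \<in> S" for l
  proof -
    have "coprime (E * m l) (q l)"
      using E[OF that] pairwise that by (auto simp: m_def intro: prod_coprime_left)
    then obtain u v where "u * (E * m l) + v * q l = 1"
      using bezout_int[of "E * m l" "q l"] by auto
    then have "u * (E * m l) - 1 = - v * q l"
      by simp
    then show ?thesis
      by (metis dvd_triv_right)
  qed
  then obtain t where t: "\<And>l. l \<in> S \<Longrightarrow> q l dvd t l * (E * m l) - 1"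
    by metis
  define c where "c l = t l * m l" for l
  have "q l dvd E * sum c S - 1" if l: "l \<in> S" for l
  proof -
    have "q l dvd m l'" if "l' \<in> S - {l}" for l'
      using that l fin by (auto simp: m_def intro: dvd_prodI)
    then have "q l dvd (\<Sum>l'\<in>S - {l}. E * c l')"
      unfolding c_def by (intro dvd_sum dvd_mult) simp
    with t[OF l] have "q l dvd (t l * (E * m l) - 1) + (\<Sum>l'\<in>S - {l}. E * c l')"
      by (rule dvd_add)
    moreover have "E * sum c S - 1 = (t l * (E * m l) - 1) + (\<Sum>l'\<in>S - {l}. E * c l')"
      using sum.remove[OF fin l, of c] by (simp add: c_def sum_distrib_left algebra_simps)
    ultimately show ?thesis
      by (simp add: algebra_simps)
  qed
  then have "prod q S dvd E * sum c S - 1"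
    using fin pairwise by (intro prod_dvd_if_pairwise_coprime) auto
  moreover have "prod q S dvd q l * c l" if "l \<in> S" for l
    using qm[OF that] by (simp add: c_def)
  ultimately show ?thesis
    by blast
qed

definition primary_part :: "nat \<Rightarrow> nat \<Rightarrow> nat" where
  "primary_part p N = p ^ multiplicity p N"

lemma coprime_primary_parts:
  "prime p \<Longrightarrow> prime p' \<Longrightarrow> p \<noteq> p' \<Longrightarrow> coprime (primary_part p N) (primary_part p' N')"
  using primes_coprime[of p p'] by (simp add: primary_part_def)

lemma primary_part_cofactor:
  assumes "prime p" "N > 0"
  obtains m where "N = primary_part p N * m" "\<not> p dvd m"
proof -
  have "N \<noteq> 0" "\<not> is_unit p"
    using assms not_prime_unit by auto
  then show ?thesis
    using multiplicity_decompose'[of N p] that unfolding primary_part_def by blast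
qed

lemma prod_primary_parts: "N > 0 \<Longrightarrow> (\<Prod>p\<in>prime_factors N. primary_part p N) = N"
  using prime_factorization_nat[of N] by (simp add: primary_part_def)

section \<open>Decomposition of the quotient into Sylow subgroups\<close>

locale augmentation_quotient =
  fixes G :: "('a, 'b) monoid_scheme" and R :: "rat set" and n :: nat and S :: "nat set"
  assumes group: "group G" and finite_carrier: "finite (carrier G)" and subring: "subring_rat R"
    and n_pos: "n \<ge> 1"
    and S_def: "S = {l. prime l \<and> l dvd card (carrier G) \<and> 1 / of_nat l \<notin> R}"
begin

declare aug_pow.simps(2) [simp del]

abbreviation "N \<equiv> card (carrier G)"
abbreviation "M \<equiv> aug_pow G \<int> n"
abbreviation "J \<equiv> JZ G n"
abbreviation "MR \<equiv> aug_pow G R n"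
abbreviation "JR \<equiv> aug_pow G R (Suc n)"
abbreviation "q l \<equiv> int (primary_part l N)"

sublocale M: submodule_rat \<int> M
  by (rule aug_pow_submodule[OF subring_rat_Ints])

sublocale J: submodule_rat \<int> J
  by (rule aug_pow_submodule[OF subring_rat_Ints])

sublocale MR: submodule_rat R MR
  by (rule aug_pow_submodule[OF subring])

sublocale JR: submodule_rat R JR
  by (rule aug_pow_submodule[OF subring])

lemma N_pos: "N > 0"
  using finite_carrier group.subgroup_self[OF group] subgroup.one_closed by (fastforce simp: card_gt_0_iff)

lemma J_subset_JR: "J \<subseteq> JR" and M_subset_MR: "M \<subseteq> MR"
  by (rule aug_pow_mono[OF Ints_subset_subring_rat[OF subring]])+

lemma card_smult_mem_J: "x \<in> M \<Longrightarrow> smult_fun (of_int N) x \<in> J"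
  using group.card_smult_aug_pow_Suc[OF group finite_carrier subring_rat_Ints n_pos] by simp

lemma MR_clear_denominators: "x \<in> MR \<Longrightarrow> \<exists>D\<in>unit_nats R. smult_fun (of_nat D) x \<in> M"
  and JR_clear_denominators: "y \<in> JR \<Longrightarrow> \<exists>D\<in>unit_nats R. smult_fun (of_nat D) y \<in> J"
  by (simp_all only: aug_pow_clear_denominators[OF subring finite_carrier])

lemma S_subset: "S \<subseteq> prime_factors N"
  using N_pos by (auto simp: S_def prime_factors_dvd)

lemma finite_S: "finite S"
  using S_subset finite_subset by blast

lemma prime_S: "l \<in> S \<Longrightarrow> prime l"
  by (simp add: S_def)

lemma coprime_q: "l \<in> S \<Longrightarrow> l' \<in> S \<Longrightarrow> l \<noteq> l' \<Longrightarrow> coprime (q l) (q l')"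
  using coprime_primary_parts prime_S by auto

lemma coprime_unit_nats_q: "D \<in> unit_nats R \<Longrightarrow> l \<in> S \<Longrightarrow> coprime (int D) (q l)"
  using coprime_unit_nats_prime[OF subring] by (auto simp: S_def primary_part_def)

lemma complement_in_unit_nats: "(\<Prod>p\<in>prime_factors N - S. primary_part p N) \<in> unit_nats R"
proof -
  have "p \<in> unit_nats R" if "p \<in> prime_factors N - S" for p
    using that N_pos prime_gt_0_nat by (auto simp: S_def unit_nats_def prime_factors_dvd)
  then show ?thesis
    by (auto simp: primary_part_def intro!: unit_nats_prod unit_nats_power subring)
qed

lemma card_eq_prod_S_complement: "int N = prod q S * (\<Prod>p\<in>prime_factors N - S. primary_part p N)"
proof -
  have "N = (\<Prod>l\<in>S. primary_part l N) * (\<Prod>p\<in>prime_factors N - S. primary_part p N)"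
    using prod.subset_diff[OF S_subset, of "\<lambda>p. primary_part p N"] prod_primary_parts[OF N_pos]
    by (simp add: mult.commute)
  then show ?thesis
    by (metis of_nat_mult of_nat_prod)
qed

lemma SylQ_iff:
  assumes "prime l"
  shows "X \<in> SylQ G n l \<longleftrightarrow> (\<exists>x\<in>M. X = qcoset J x \<and> smult_fun (of_int (q l)) x \<in> J)"
proof
  assume "X \<in> SylQ G n l"
  then obtain x k where x: "x \<in> M" "X = qcoset J x" and k: "qsmul J (of_nat (l ^ k)) X = J"
    by (auto simp: SylQ_def Qn_def)
  have "qcoset J (smult_fun (of_nat (l ^ k)) x) = qcoset J 0"
    using k x J.qsmul_qcoset[of "of_nat (l ^ k)"] by (simp add: J.qcoset_zero)
  then have "smult_fun (of_nat (l ^ k)) x \<in> J"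
    by (simp add: J.qcoset_eq_iff)
  from J.smult_int_closed[OF this, of "q l"]
  have "smult_fun (of_int (int (l ^ k))) (smult_fun (of_int (q l)) x) \<in> J"
    by (simp add: mult.commute)
  moreover obtain m where m: "N = primary_part l N * m" "\<not> l dvd m"
    using primary_part_cofactor[OF assms N_pos] .
  then have "smult_fun (of_int (int m)) (smult_fun (of_int (q l)) x) \<in> J"
    using card_smult_mem_J[OF x(1)] by (metis mult.commute of_int_mult of_nat_mult smult_fun_smult_fun)
  moreover have "coprime (int (l ^ k)) (int m)"
    using m(2) assms prime_imp_coprime by auto
  ultimately show "\<exists>x\<in>M. X = qcoset J x \<and> smult_fun (of_int (q l)) x \<in> J"
    using x J.coprime_smult_closed_imp_mem by blast
next
  assume "\<exists>x\<in>M. X = qcoset J x \<and> smult_fun (of_int (q l)) x \<in> J"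
  then obtain x where x: "x \<in> M" "X = qcoset J x" "smult_fun (of_int (q l)) x \<in> J"
    by blast
  then have "qsmul J (of_nat (l ^ multiplicity l N)) X = J"
    using J.qsmul_qcoset[of "of_nat (l ^ multiplicity l N)"] J.qcoset_eq_iff[of _ 0]
    by (simp add: primary_part_def J.qcoset_zero)
  then show "X \<in> SylQ G n l"
    using x by (auto simp: SylQ_def Qn_def)
qed

definition rep :: "('a \<Rightarrow> rat) set \<Rightarrow> 'a \<Rightarrow> rat" where
  "rep X = (SOME x. x \<in> M \<and> X = qcoset J x)"

lemma rep_qcoset: "x \<in> M \<Longrightarrow> rep (qcoset J x) \<in> M \<and> qcoset J (rep (qcoset J x)) = qcoset J x"
  unfolding rep_def by (rule someI2[of _ x]) auto

lemma rep_qcoset_diff: "x \<in> M \<Longrightarrow> rep (qcoset J x) - x \<in> J"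
  using rep_qcoset J.qcoset_eq_iff by blast

lemma DS_iff: "F \<in> DS G n S \<longleftrightarrow>
    (\<forall>l\<in>S. \<exists>x\<in>M. F l = qcoset J x \<and> smult_fun (of_int (q l)) x \<in> J) \<and> (\<forall>l. l \<notin> S \<longrightarrow> F l = J)"
  using SylQ_iff prime_S by (auto simp: DS_def)

lemma DS_component:
  assumes "F \<in> DS G n S" "l \<in> S"
  shows "rep (F l) \<in> M" "F l = qcoset J (rep (F l))" "smult_fun (of_int (q l)) (rep (F l)) \<in> J"
proof -
  obtain x where x: "x \<in> M" "F l = qcoset J x" "smult_fun (of_int (q l)) x \<in> J"
    using assms DS_iff by blast
  then show "rep (F l) \<in> M" "F l = qcoset J (rep (F l))"
    using rep_qcoset by auto
  have "smult_fun (of_int (q l)) (rep (F l) - x) \<in> J"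
    using rep_qcoset_diff[OF x(1)] x(2) J.smult_nat_closed by simp
  from J.add_closed[OF this x(3)] show "smult_fun (of_int (q l)) (rep (F l)) \<in> J"
    by (simp add: smult_fun_diff_right)
qed

lemma DS_outside: "F \<in> DS G n S \<Longrightarrow> l \<notin> S \<Longrightarrow> F l = J"
  by (simp add: DS_def)

lemma ds_add_in_DS:
  assumes "F \<in> DS G n S" "F' \<in> DS G n S"
  shows "ds_add F F' \<in> DS G n S"
  unfolding DS_iff
proof (intro conjI ballI allI impI)
  fix l assume l: "l \<in> S"
  have "ds_add F F' l = qadd (qcoset J (rep (F l))) (qcoset J (rep (F' l)))"
    unfolding ds_add_def using DS_component(2)[OF assms(1) l] DS_component(2)[OF assms(2) l] by simp
  also have "\<dots> = qcoset J (rep (F l) + rep (F' l))"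
    by (rule J.qadd_qcoset)
  finally have "ds_add F F' l = qcoset J (rep (F l) + rep (F' l))" .
  moreover have "rep (F l) + rep (F' l) \<in> M"
    using DS_component(1)[OF assms(1) l] DS_component(1)[OF assms(2) l] by (rule M.add_closed)
  moreover have "smult_fun (of_int (q l)) (rep (F l) + rep (F' l)) \<in> J"
    using DS_component(3)[OF assms(1) l] DS_component(3)[OF assms(2) l]
    by (simp add: smult_fun_add_right J.add_closed)
  ultimately show "\<exists>x\<in>M. ds_add F F' l = qcoset J x \<and> smult_fun (of_int (q l)) x \<in> J"
    by blast
next
  fix l assume "l \<notin> S"
  then show "ds_add F F' l = J"
    using assms J.qadd_qcoset[of 0 0] by (simp add: ds_add_def DS_outside J.qcoset_zero)
qed

lemma ds_zmult_in_DS: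
  assumes "F \<in> DS G n S"
  shows "ds_zmult G n k F \<in> DS G n S"
  unfolding DS_iff
proof (intro conjI ballI allI impI)
  fix l assume l: "l \<in> S"
  have "ds_zmult G n k F l = qsmul J (of_int k) (qcoset J (rep (F l)))"
    unfolding ds_zmult_def using DS_component(2)[OF assms l] by simp
  also have "\<dots> = qcoset J (smult_fun (of_int k) (rep (F l)))"
    by (simp add: J.qsmul_qcoset)
  finally have "ds_zmult G n k F l = qcoset J (smult_fun (of_int k) (rep (F l)))" .
  moreover have "smult_fun (of_int k) (rep (F l)) \<in> M"
    using DS_component(1)[OF assms l] by (rule M.smult_int_closed)
  moreover have "smult_fun (of_int (q l)) (smult_fun (of_int k) (rep (F l))) \<in> J"
    using J.smult_int_closed[OF DS_component(3)[OF assms l], of k] by (simp add: mult.commute)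
  ultimately show "\<exists>x\<in>M. ds_zmult G n k F l = qcoset J x \<and> smult_fun (of_int (q l)) x \<in> J"
    by blast
next
  fix l assume "l \<notin> S"
  then show "ds_zmult G n k F l = J"
    using assms J.qsmul_qcoset[of "of_int k" 0] by (simp add: ds_zmult_def DS_outside J.qcoset_zero)
qed

definition ds_sum :: "(nat \<Rightarrow> ('a \<Rightarrow> rat) set) \<Rightarrow> ('a \<Rightarrow> rat) set" where
  "ds_sum F = qcoset JR (\<Sum>l\<in>S. rep (F l))"

lemma sum_rep_in_M: "F \<in> DS G n S \<Longrightarrow> (\<Sum>l\<in>S. rep (F l)) \<in> M"
  using DS_component(1) by (blast intro: M.sum_closed)

lemma ds_sum_in_Qn: "F \<in> DS G n S \<Longrightarrow> ds_sum F \<in> Qn G R n"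
  using sum_rep_in_M M_subset_MR by (auto simp: ds_sum_def Qn_def)

lemma ds_sum_eq:
  assumes "\<And>l. l \<in> S \<Longrightarrow> x l \<in> M \<and> F l = qcoset J (x l)"
  shows "ds_sum F = qcoset JR (\<Sum>l\<in>S. x l)"
proof -
  have "(\<Sum>l\<in>S. rep (F l)) - (\<Sum>l\<in>S. x l) = (\<Sum>l\<in>S. rep (qcoset J (x l)) - x l)"
    using assms by (simp add: sum_subtractf)
  also have "\<dots> \<in> JR"
    using assms rep_qcoset_diff J_subset_JR by (blast intro: JR.sum_closed)
  finally show ?thesis
    by (simp add: ds_sum_def JR.qcoset_eq_iff)
qed

lemma ds_sum_ds_add:
  assumes "F \<in> DS G n S" "F' \<in> DS G n S"
  shows "ds_sum (ds_add F F') = qadd (ds_sum F) (ds_sum F')"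
proof -
  have "ds_sum (ds_add F F') = qcoset JR (\<Sum>l\<in>S. rep (F l) + rep (F' l))"
  proof (rule ds_sum_eq)
    fix l assume l: "l \<in> S"
    have "ds_add F F' l = qadd (qcoset J (rep (F l))) (qcoset J (rep (F' l)))"
      unfolding ds_add_def using DS_component(2)[OF assms(1) l] DS_component(2)[OF assms(2) l] by simp
    then show "rep (F l) + rep (F' l) \<in> M \<and> ds_add F F' l = qcoset J (rep (F l) + rep (F' l))"
      using DS_component(1)[OF assms(1) l] DS_component(1)[OF assms(2) l]
      by (simp add: J.qadd_qcoset M.add_closed)
  qed
  then show ?thesis
    by (simp add: ds_sum_def sum.distrib JR.qadd_qcoset)
qed

lemma ds_sum_ds_zmult:
  assumes "F \<in> DS G n S"
  shows "ds_sum (ds_zmult G n k F) = qsmul JR (of_int k) (ds_sum F)"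
proof -
  have "ds_sum (ds_zmult G n k F) = qcoset JR (\<Sum>l\<in>S. smult_fun (of_int k) (rep (F l)))"
  proof (rule ds_sum_eq)
    fix l assume l: "l \<in> S"
    have "ds_zmult G n k F l = qsmul J (of_int k) (qcoset J (rep (F l)))"
      unfolding ds_zmult_def using DS_component(2)[OF assms l] by simp
    then show "smult_fun (of_int k) (rep (F l)) \<in> M
        \<and> ds_zmult G n k F l = qcoset J (smult_fun (of_int k) (rep (F l)))"
      using DS_component(1)[OF assms l] by (simp add: J.qsmul_qcoset M.smult_int_closed)
  qed
  then show ?thesis
    by (simp add: ds_sum_def JR.qsmul_qcoset subring_rat_of_int subring smult_fun_sum_right)
qed

text \<open>Clearing the denominator and multiplying by all \<open>q l\<close> with \<open>l \<noteq> l\<^sub>0\<close> kills every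
  summand but \<open>w l\<^sub>0\<close>, by a factor prime to \<open>q l\<^sub>0\<close>.\<close>
lemma torsion_component_in_J:
  assumes w: "\<And>l. l \<in> S \<Longrightarrow> smult_fun (of_int (q l)) (w l) \<in> J"
    and sum: "(\<Sum>l\<in>S. w l) \<in> JR" and l0: "l\<^sub>0 \<in> S"
  shows "w l\<^sub>0 \<in> J"
proof -
  obtain D where D: "D \<in> unit_nats R" "smult_fun (of_nat D) (\<Sum>l\<in>S. w l) \<in> J"
    using JR_clear_denominators[OF sum] by blast
  define c where "c = int D * (\<Prod>l\<in>S - {l\<^sub>0}. q l)"
  have "smult_fun (of_int c) (\<Sum>l\<in>S. w l) \<in> J"
    using J.smult_int_closed[OF D(2), of "\<Prod>l\<in>S - {l\<^sub>0}. q l"] by (simp add: c_def mult.commute)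
  moreover have "smult_fun (of_int c) (\<Sum>l\<in>S. w l)
      = smult_fun (of_int c) (w l\<^sub>0) + (\<Sum>l\<in>S - {l\<^sub>0}. smult_fun (of_int c) (w l))"
    using sum.remove[OF finite_S l0, of w] by (simp add: smult_fun_add_right smult_fun_sum_right)
  moreover have "(\<Sum>l\<in>S - {l\<^sub>0}. smult_fun (of_int c) (w l)) \<in> J"
  proof (rule J.sum_closed)
    fix l assume l: "l \<in> S - {l\<^sub>0}"
    then have "q l dvd c"
      unfolding c_def using finite_S by (intro dvd_mult dvd_prodI) auto
    then show "smult_fun (of_int c) (w l) \<in> J"
      using J.smult_dvd_closed w l by blast
  qed
  ultimately have "smult_fun (of_int c) (w l\<^sub>0) \<in> J"
    by (metis J.diff_closed add_diff_cancel_right')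
  moreover have "coprime (\<Prod>l\<in>S - {l\<^sub>0}. q l) (q l\<^sub>0)"
    by (rule prod_coprime_left) (use coprime_q l0 in auto)
  then have "coprime c (q l\<^sub>0)"
    using coprime_unit_nats_q[OF D(1) l0] by (simp add: c_def)
  ultimately show ?thesis
    using J.coprime_smult_closed_imp_mem w[OF l0] by blast
qed

lemma inj_on_ds_sum: "inj_on ds_sum (DS G n S)"
proof (rule inj_onI, rule ext)
  fix F F' l
  assume F: "F \<in> DS G n S" and F': "F' \<in> DS G n S" and eq: "ds_sum F = ds_sum F'"
  show "F l = F' l"
  proof (cases "l \<in> S")
    case True
    define w where "w l = rep (F l) - rep (F' l)" for l
    have "(\<Sum>l\<in>S. w l) \<in> JR"
      using eq by (simp add: ds_sum_def JR.qcoset_eq_iff w_def sum_subtractf)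
    moreover have "smult_fun (of_int (q l)) (w l) \<in> J" if "l \<in> S" for l
      using DS_component(3)[OF F that] DS_component(3)[OF F' that]
      by (simp add: w_def smult_fun_diff_right J.diff_closed)
    ultimately have "w l \<in> J"
      using torsion_component_in_J True by blast
    then show ?thesis
      using DS_component(2)[OF F True] DS_component(2)[OF F' True] J.qcoset_eq_iff w_def by metis
  qed (simp add: F F' DS_outside)
qed

lemma MR_clear_denominators_S_torsion:
  assumes "x \<in> MR"
  obtains E where "E \<in> unit_nats R" "smult_fun (of_nat E) x \<in> M"
    "smult_fun (of_int (prod q S)) (smult_fun (of_nat E) x) \<in> J"
proof -
  obtain D where D: "D \<in> unit_nats R" "smult_fun (of_nat D) x \<in> M"
    using MR_clear_denominators[OF assms] by blast
  define T where "T = (\<Prod>p\<in>prime_factors N - S. primary_part p N)"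
  text \<open>\<open>T\<close> absorbs the primary parts of \<open>N\<close> outside \<open>S\<close>, so the \<open>S\<close>-part of \<open>N\<close>
    already kills \<open>T D x\<close>.\<close>
  have "int N = prod q S * int T"
    unfolding T_def by (rule card_eq_prod_S_complement)
  then have "(of_nat N :: rat) = of_int (prod q S) * of_nat T"
    using arg_cong[of _ _ "of_int :: int \<Rightarrow> rat"] by fastforce
  then have "smult_fun (of_int (prod q S)) (smult_fun (of_nat (D * T)) x)
      = smult_fun (of_int (int N)) (smult_fun (of_nat D) x)"
    by (simp add: mult_ac)
  moreover have "D * T \<in> unit_nats R"
    using unit_nats_mult[OF subring D(1) complement_in_unit_nats] by (simp add: T_def)
  moreover have "smult_fun (of_nat (D * T)) x \<in> M"
    using M.smult_nat_closed[OF D(2), of T] by (simp add: mult.commute)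
  ultimately show ?thesis
    using that card_smult_mem_J[OF D(2)] by simp
qed

lemma ds_sum_surj:
  assumes "X \<in> Qn G R n"
  shows "\<exists>F\<in>DS G n S. ds_sum F = X"
proof -
  obtain x where x: "x \<in> MR" "X = qcoset JR x"
    using assms by (auto simp: Qn_def)
  obtain E where E: "E \<in> unit_nats R" "smult_fun (of_nat E) x \<in> M"
    and Py: "smult_fun (of_int (prod q S)) (smult_fun (of_nat E) x) \<in> J"
    using MR_clear_denominators_S_torsion[OF x(1)] .
  define y where "y = smult_fun (of_nat E) x"
  note y = E(2)[folded y_def] and Py = Py[folded y_def]
  have "\<exists>c. (\<forall>l\<in>S. prod q S dvd q l * c l) \<and> prod q S dvd int E * sum c S - 1"
    using finite_S coprime_q coprime_unit_nats_q[OF E(1)] by (intro crt_components_of_inverse)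
  then obtain c where c: "\<And>l. l \<in> S \<Longrightarrow> prod q S dvd q l * c l" "prod q S dvd int E * sum c S - 1"
    by blast
  define F where "F l = (if l \<in> S then qcoset J (smult_fun (of_int (c l)) y) else J)" for l
  have "F \<in> DS G n S"
    unfolding DS_iff
  proof (intro conjI ballI allI impI)
    fix l assume l: "l \<in> S"
    have "smult_fun (of_int (q l * c l)) y \<in> J"
      using J.smult_dvd_closed[OF c(1)[OF l] Py] .
    then show "\<exists>x\<in>M. F l = qcoset J x \<and> smult_fun (of_int (q l)) x \<in> J"
      using l M.smult_int_closed[OF y] by (auto simp: F_def)
  qed (simp add: F_def)
  moreover have "ds_sum F = qcoset JR (\<Sum>l\<in>S. smult_fun (of_int (c l)) y)"
    using M.smult_int_closed[OF y] by (intro ds_sum_eq) (simp add: F_def)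
  moreover have "(\<Sum>l\<in>S. smult_fun (of_int (c l)) y) - x \<in> JR"
  proof (rule JR.smult_invertible_imp_mem)
    have "smult_fun (of_nat E) (\<Sum>l\<in>S. smult_fun (of_int (c l)) y) = smult_fun (of_int (int E * sum c S)) y"
      by (simp add: smult_fun_sum_right smult_fun_sum_left sum_distrib_left)
    then have "smult_fun (of_nat E) ((\<Sum>l\<in>S. smult_fun (of_int (c l)) y) - x)
        = smult_fun (of_int (int E * sum c S)) y - y"
      by (simp only: smult_fun_diff_right flip: y_def)
    also have "\<dots> = smult_fun (of_int (int E * sum c S - 1)) y"
      by (simp add: smult_fun_diff_left)
    also have "\<dots> \<in> J"
      using J.smult_dvd_closed[OF c(2) Py] .
    finally show "smult_fun (of_nat E) ((\<Sum>l\<in>S. smult_fun (of_int (c l)) y) - x) \<in> JR"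
      using J_subset_JR by blast
  qed (use E(1) in \<open>auto simp: unit_nats_def\<close>)
  ultimately show ?thesis
    using x(2) JR.qcoset_eq_iff by blast
qed

lemma bij_betw_ds_sum: "bij_betw ds_sum (DS G n S) (Qn G R n)"
  using inj_on_ds_sum ds_sum_in_Qn ds_sum_surj by (auto simp: bij_betw_def)

lemma ds_zmult_eq_iff:
  assumes b: "1 / of_int b \<in> R" "b \<noteq> 0" and F: "F \<in> DS G n S" and F': "F' \<in> DS G n S"
  shows "ds_zmult G n b F' = F \<longleftrightarrow> ds_sum F' = qsmul JR (1 / of_int b) (ds_sum F)"
proof -
  have "ds_zmult G n b F' = F \<longleftrightarrow> ds_sum (ds_zmult G n b F') = ds_sum F"
    using inj_onD[OF inj_on_ds_sum] ds_zmult_in_DS[OF F'] F by blast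
  also have "\<dots> \<longleftrightarrow> qsmul JR (of_int b) (ds_sum F') = ds_sum F"
    by (simp add: ds_sum_ds_zmult F')
  also have "\<dots> \<longleftrightarrow> ds_sum F' = qsmul JR (1 / of_int b) (ds_sum F)"
    unfolding ds_sum_def using b by (intro JR.qsmul_qcoset_eq_iff) (simp_all add: subring_rat_of_int subring)
  finally show ?thesis .
qed

text \<open>The action of \<open>a / b\<close> on the direct sum divides by \<open>b\<close> first; under the bijection
  \<open>ds_sum\<close> this division is multiplication by \<open>1 / b \<in> R\<close>.\<close>
lemma ds_rsmul:
  assumes r: "r \<in> R" and F: "F \<in> DS G n S"
  shows "ds_rsmul G n S r F \<in> DS G n S \<and> ds_sum (ds_rsmul G n S r F) = qsmul JR r (ds_sum F)"
proof -
  obtain a b where ab: "quotient_of r = (a, b)"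
    by (cases "quotient_of r")
  have b: "1 / of_int b \<in> R" "b \<noteq> 0"
    using quotient_of_denom_pos[OF ab] denominator_in_unit_nats[OF subring r ab]
    by (auto simp: unit_nats_def)
  have "qsmul JR (1 / of_int b) (ds_sum F) \<in> Qn G R n"
    using sum_rep_in_M[OF F] M_subset_MR b(1)
    by (auto simp: ds_sum_def Qn_def JR.qsmul_qcoset intro: MR.smult_closed)
  then obtain F' where F': "F' \<in> DS G n S" "ds_sum F' = qsmul JR (1 / of_int b) (ds_sum F)"
    using ds_sum_surj by blast
  have "(THE F''. F'' \<in> DS G n S \<and> ds_zmult G n b F'' = F) = F'"
  proof (rule the_equality)
    fix F'' assume "F'' \<in> DS G n S \<and> ds_zmult G n b F'' = F"
    then show "F'' = F'"
      using ds_zmult_eq_iff[OF b F] F' inj_onD[OF inj_on_ds_sum] by metis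
  qed (use ds_zmult_eq_iff[OF b F] F' in blast)
  then have rsmul: "ds_rsmul G n S r F = ds_zmult G n a F'"
    by (simp add: ds_rsmul_def ab)
  have "ds_sum (ds_zmult G n a F') = qsmul JR (of_int a) (qsmul JR (1 / of_int b) (ds_sum F))"
    using ds_sum_ds_zmult[OF F'(1)] F'(2) by simp
  also have "\<dots> = qsmul JR r (ds_sum F)"
    unfolding ds_sum_def using b(1) r quotient_of_div[OF ab]
    by (simp add: JR.qsmul_qcoset subring_rat_of_int subring)
  finally show ?thesis
    using rsmul ds_zmult_in_DS[OF F'(1)] by simp
qed

end

theorem proposition1p4:
  fixes G :: "('a, 'b) monoid_scheme" and R :: "rat set" and n :: nat and S :: "nat set"
  assumes "comm_group G" and "finite (carrier G)" and "subring_rat R" and "n \<ge> 1"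
    and "S = {l. prime l \<and> l dvd card (carrier G) \<and> 1 / of_nat l \<notin> R}"
  shows "\<exists>\<phi>. bij_betw \<phi> (Qn G R n) (DS G n S)
     \<and> (\<forall>X\<in>Qn G R n. \<forall>Y\<in>Qn G R n. \<phi> (qadd X Y) = ds_add (\<phi> X) (\<phi> Y))
     \<and> (\<forall>r\<in>R. \<forall>X\<in>Qn G R n. \<phi> (qsmul (aug_pow G R (Suc n)) r X) = ds_rsmul G n S r (\<phi> X))"
proof -
  interpret augmentation_quotient G R n S
    by (rule augmentation_quotient.intro[OF assms(1)[unfolded comm_group_def, THEN conjunct2] assms(2-5)])
  define \<phi> where "\<phi> = inv_into (DS G n S) ds_sum"
  have bij: "bij_betw \<phi> (Qn G R n) (DS G n S)"
    unfolding \<phi>_def by (rule bij_betw_inv_into[OF bij_betw_ds_sum])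
  have \<phi>: "\<phi> X \<in> DS G n S" "ds_sum (\<phi> X) = X" if "X \<in> Qn G R n" for X
    using that bij_betw_ds_sum unfolding \<phi>_def
    by (auto simp: bij_betw_def inv_into_into f_inv_into_f)
  have \<phi>_ds_sum: "\<phi> (ds_sum F) = F" if "F \<in> DS G n S" for F
    using that bij_betw_ds_sum unfolding \<phi>_def by (simp add: bij_betw_def)
  have "\<phi> (qadd X Y) = ds_add (\<phi> X) (\<phi> Y)" if "X \<in> Qn G R n" "Y \<in> Qn G R n" for X Y
    using \<phi>_ds_sum[OF ds_add_in_DS] ds_sum_ds_add \<phi> that by metis
  moreover have "\<phi> (qsmul JR r X) = ds_rsmul G n S r (\<phi> X)" if "r \<in> R" "X \<in> Qn G R n" for r X
    using \<phi>_ds_sum ds_rsmul[OF that(1)] \<phi>[OF that(2)] by metis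
  ultimately show ?thesis
    using bij by blast
qed

end
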